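(* If $f : X \to \mathbb{R}$ is semi-Borel, then the game $\Gamma(f)$ is determined (one of the two players has a winning strategy).
   Context: Let $A$ be a non-empty countable set and $T$ a pruned tree on $A$ (a set of finite sequences of elements of $A$, closed under initial segments, in which every sequence has a proper extension in $T$). Let $X$ be the set of infinite branches of $T$, with the topology generated by the cylinder sets $O(s) = \{x \in X : s \text{ is an initial segment of } x\}$, $s \in T$. $f$ is semi-Borel if for each $r \in \mathbb{R}$ the set $\{f \ge r\} = \{x \in X : f(x) \ge r\}$ is co-analytic. The game $\Gamma(f)$: Player I and Player II alternate, Player I moving first; Player I plays $x_0, x_1, \dots \in A$ subject to $(x_0,\dots,x_t) \in T$ for all $t$, and after each move $x_t$ Player II plays a real number $v_t$. Player II wins the run iff $f(x_0,x_1,\dots) = \limsup_{t\to\infty} v_t$; otherwise Player I wins. *)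

theory Defs
  imports "HOL-Analysis.Analysis"
begin

definition is_tree :: "'a set \<Rightarrow> 'a list set \<Rightarrow> bool" where
  "is_tree A T \<longleftrightarrow> T \<subseteq> lists A \<and> (\<forall>s\<in>T. \<forall>n. take n s \<in> T)"

definition pruned :: "'a list set \<Rightarrow> bool" where
  "pruned T \<longleftrightarrow> (\<forall>s\<in>T. \<exists>u\<in>T. length s < length u \<and> take (length s) u = s)"

definition branches :: "'a list set \<Rightarrow> (nat \<Rightarrow> 'a) set" where
  "branches T = {x. \<forall>n. map x [0..<n] \<in> T}"

definition cyl :: "'a list set \<Rightarrow> 'a list \<Rightarrow> (nat \<Rightarrow> 'a) set" where
  "cyl T s = {x \<in> branches T. map x [0..<length s] = s}"

definition branch_topology :: "'a list set \<Rightarrow> (nat \<Rightarrow> 'a) topology" where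
  "branch_topology T = topology_generated_by (cyl T ` T)"

definition baire_topology :: "(nat \<Rightarrow> nat) topology" where
  "baire_topology = product_topology (\<lambda>_. (euclidean :: nat topology)) UNIV"

definition analytic_in :: "'a list set \<Rightarrow> (nat \<Rightarrow> 'a) set \<Rightarrow> bool" where
  "analytic_in T S \<longleftrightarrow> S \<subseteq> branches T \<and>
     (S = {} \<or> (\<exists>g. continuous_map baire_topology (branch_topology T) g \<and>
                    g ` topspace baire_topology = S))"

definition coanalytic_in :: "'a list set \<Rightarrow> (nat \<Rightarrow> 'a) set \<Rightarrow> bool" where
  "coanalytic_in T S \<longleftrightarrow> S \<subseteq> branches T \<and> analytic_in T (branches T - S)"

definition semi_Borel :: "'a list set \<Rightarrow> ((nat \<Rightarrow> 'a) \<Rightarrow> real) \<Rightarrow> bool" where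
  "semi_Borel T f \<longleftrightarrow> (\<forall>r::real. coanalytic_in T {x \<in> branches T. f x \<ge> r})"

text \<open>Game positions: the list of completed rounds (x_t, v_t).
  A strategy of Player I maps a position to his next move x_t;
  a strategy of Player II maps a position and I's current move x_t to v_t.\<close>
type_synonym ('a) stratI = "('a \<times> real) list \<Rightarrow> 'a"
type_synonym ('a) stratII = "('a \<times> real) list \<Rightarrow> 'a \<Rightarrow> real"

definition legal_stratI :: "'a list set \<Rightarrow> 'a stratI \<Rightarrow> bool" where
  "legal_stratI T \<sigma> \<longleftrightarrow> (\<forall>h. map fst h \<in> T \<longrightarrow> map fst h @ [\<sigma> h] \<in> T)"

primrec play_hist :: "'a stratI \<Rightarrow> 'a stratII \<Rightarrow> nat \<Rightarrow> ('a \<times> real) list" where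
  "play_hist \<sigma> \<tau> 0 = []"
| "play_hist \<sigma> \<tau> (Suc n) =
     play_hist \<sigma> \<tau> n @ [(\<sigma> (play_hist \<sigma> \<tau> n), \<tau> (play_hist \<sigma> \<tau> n) (\<sigma> (play_hist \<sigma> \<tau> n)))]"

definition play_x :: "'a stratI \<Rightarrow> 'a stratII \<Rightarrow> nat \<Rightarrow> 'a" where
  "play_x \<sigma> \<tau> t = fst (play_hist \<sigma> \<tau> (Suc t) ! t)"

definition play_v :: "'a stratI \<Rightarrow> 'a stratII \<Rightarrow> nat \<Rightarrow> real" where
  "play_v \<sigma> \<tau> t = snd (play_hist \<sigma> \<tau> (Suc t) ! t)"

definition II_wins_run :: "((nat \<Rightarrow> 'a) \<Rightarrow> real) \<Rightarrow> 'a stratI \<Rightarrow> 'a stratII \<Rightarrow> bool" where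
  "II_wins_run f \<sigma> \<tau> \<longleftrightarrow>
     ereal (f (play_x \<sigma> \<tau>)) = limsup (\<lambda>t. ereal (play_v \<sigma> \<tau> t))"

definition winning_I :: "'a list set \<Rightarrow> ((nat \<Rightarrow> 'a) \<Rightarrow> real) \<Rightarrow> 'a stratI \<Rightarrow> bool" where
  "winning_I T f \<sigma> \<longleftrightarrow> legal_stratI T \<sigma> \<and> (\<forall>\<tau>. \<not> II_wins_run f \<sigma> \<tau>)"

definition winning_II :: "'a list set \<Rightarrow> ((nat \<Rightarrow> 'a) \<Rightarrow> real) \<Rightarrow> 'a stratII \<Rightarrow> bool" where
  "winning_II T f \<tau> \<longleftrightarrow> (\<forall>\<sigma>. legal_stratI T \<sigma> \<longrightarrow> II_wins_run f \<sigma> \<tau>)"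

definition game_determined :: "'a list set \<Rightarrow> ((nat \<Rightarrow> 'a) \<Rightarrow> real) \<Rightarrow> bool" where
  "game_determined T f \<longleftrightarrow> (\<exists>\<sigma>. winning_I T f \<sigma>) \<or> (\<exists>\<tau>. winning_II T f \<tau>)"

end

(* Fix rationals p < q. The set {f < p} is analytic, the image g[N^N] of Baire space under a
   continuous g. Either it can be separated from {f \<ge> q} by a G_delta set, or Player I wins:
   he follows a branch of {f \<ge> q} together with a finite code s such that g[N_s] near the
   current position cannot be separated from {f \<ge> q}; whenever Player II claims a value
   above (p + q) / 2 he lengthens s by one digit and moves to a new such branch. If this happens
   finitely often, the run is a branch of {f \<ge> q}; otherwise the codes converge to some y and
   the run is g y, so its value is below p. If Player I has no winning strategy, all these
   separations exist, so every superlevel set {f \<ge> r} is G_delta, and Player II wins by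
   claiming at each move the largest rational whose G_delta approximations the run has just
   entered once more. *)

theory Submission
  imports Defs
begin

definition prefix :: "(nat \<Rightarrow> 'b) \<Rightarrow> nat \<Rightarrow> 'b list" where
  "prefix x n = map x [0..<n]"

definition extending :: "'b list \<Rightarrow> (nat \<Rightarrow> 'b) set" where
  "extending s = {x. prefix x (length s) = s}"

definition cylinders :: "'b list set \<Rightarrow> (nat \<Rightarrow> 'b) set" where
  "cylinders W = {x. \<exists>n. prefix x n \<in> W}"

lemma length_prefix [simp]: "length (prefix x n) = n"
  by (simp add: prefix_def)

lemma prefix_0 [simp]: "prefix x 0 = []"
  by (simp add: prefix_def)

lemma prefix_Suc: "prefix x (Suc n) = prefix x n @ [x n]"
  by (simp add: prefix_def)

lemma take_prefix [simp]: "take k (prefix x n) = prefix x (min k n)"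
  by (simp add: prefix_def take_map min_def)

lemma nth_prefix [simp]: "i < n \<Longrightarrow> prefix x n ! i = x i"
  by (simp add: prefix_def)

lemma prefix_eq_iff: "prefix x n = prefix y n \<longleftrightarrow> (\<forall>i<n. x i = y i)"
  by (auto simp: prefix_def)

lemma prefix_eq_le: "prefix x n = prefix y n \<Longrightarrow> k \<le> n \<Longrightarrow> prefix x k = prefix y k"
  by (auto simp: prefix_eq_iff)

lemma eq_if_prefixes_eq: "(\<And>n. n \<ge> N \<Longrightarrow> prefix x n = prefix y n) \<Longrightarrow> x = y"
proof
  fix i assume "\<And>n. n \<ge> N \<Longrightarrow> prefix x n = prefix y n"
  then have "prefix x (max N (Suc i)) = prefix y (max N (Suc i))" by simp
  then show "x i = y i" by (auto simp: prefix_eq_iff)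
qed

lemma extending_snoc_subset: "extending (s @ [k]) \<subseteq> extending s"
  unfolding extending_def by (auto simp: prefix_Suc)

lemma extending_eq_UN_snoc: "extending s = (\<Union>k. extending (s @ [k]))"
proof
  show "extending s \<subseteq> (\<Union>k. extending (s @ [k]))"
  proof
    fix x assume "x \<in> extending s"
    then have "x \<in> extending (s @ [x (length s)])" by (simp add: extending_def prefix_Suc)
    then show "x \<in> (\<Union>k. extending (s @ [k]))" by blast
  qed
qed (use extending_snoc_subset in fast)

lemma prefix_chain_limit:
  fixes sn :: "nat \<Rightarrow> 'b list"
  assumes chain: "\<And>t. take (length (sn t)) (sn (Suc t)) = sn t"
    and unbounded: "\<And>M. \<exists>t. M \<le> length (sn t)"
  obtains y where "\<And>t. prefix y (length (sn t)) = sn t"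
proof
  have mono: "take (length (sn t)) (sn t') = sn t" if "t \<le> t'" for t t'
    using that
  proof (induction rule: dec_induct)
    case (step t')
    then have "length (sn t) \<le> length (sn t')" by (metis length_take min.bounded_iff order_refl)
    then show ?case using step.IH chain[of t'] by (metis min.absorb1 take_take)
  qed simp
  define y where "y i = sn (LEAST t. i < length (sn t)) ! i" for i
  fix t show "prefix y (length (sn t)) = sn t"
  proof (rule nth_equalityI)
    fix i assume "i < length (prefix y (length (sn t)))"
    then have i: "i < length (sn t)" by simp
    define t0 where "t0 = (LEAST t. i < length (sn t))"
    have "t0 \<le> t" "i < length (sn t0)"
      using i unfolding t0_def by (auto intro: Least_le LeastI)
    then have "sn t0 ! i = sn t ! i" using mono by (metis nth_take)
    then show "prefix y (length (sn t)) ! i = sn t ! i" using i by (simp add: y_def t0_def)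
  qed simp
qed

lemma cylinders_Nil: "cylinders {[]} = UNIV"
  by (auto simp: cylinders_def intro: exI[of _ 0])

lemma cyl_iff: "x \<in> cyl T u \<longleftrightarrow> x \<in> branches T \<and> x \<in> extending u"
  by (simp add: cyl_def extending_def prefix_def)

lemma cyl_Nil: "cyl T [] = branches T"
  by (simp add: cyl_def)

lemma branches_iff: "x \<in> branches T \<longleftrightarrow> (\<forall>n. prefix x n \<in> T)"
  by (simp add: branches_def prefix_def)

lemma Nil_in_tree: "is_tree A T \<Longrightarrow> T \<noteq> {} \<Longrightarrow> [] \<in> T"
  unfolding is_tree_def by (metis all_not_in_conv take0)

lemma pruned_tree_snoc:
  assumes "is_tree A T" "pruned T" "s \<in> T"
  obtains a where "s @ [a] \<in> T"
proof -
  obtain u where u: "u \<in> T" "length s < length u" "take (length s) u = s"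
    using assms by (auto simp: pruned_def)
  then have "take (Suc (length s)) u \<in> T" using assms(1) by (simp add: is_tree_def)
  moreover have "take (Suc (length s)) u = s @ [u ! length s]"
    using u by (simp add: take_Suc_conv_app_nth)
  ultimately show ?thesis using that by metis
qed

lemma countable_tree: "is_tree A T \<Longrightarrow> countable A \<Longrightarrow> countable T"
  unfolding is_tree_def by (metis countable_lists countable_subset)

lemma length_play_hist [simp]: "length (play_hist \<sigma> \<tau> n) = n"
  by (induction n) auto

lemma play_x_eq: "play_x \<sigma> \<tau> i = \<sigma> (play_hist \<sigma> \<tau> i)"
  by (simp add: play_x_def nth_append)

lemma play_v_eq: "play_v \<sigma> \<tau> i = \<tau> (play_hist \<sigma> \<tau> i) (play_x \<sigma> \<tau> i)"
  by (simp add: play_v_def play_x_def nth_append)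

lemma play_hist_nth: "i < n \<Longrightarrow> play_hist \<sigma> \<tau> n ! i = (play_x \<sigma> \<tau> i, play_v \<sigma> \<tau> i)"
proof (induction n)
  case (Suc n)
  then show ?case
    by (cases "i < n") (auto simp: nth_append less_Suc_eq play_x_eq play_v_eq)
qed simp

lemma map_fst_play_hist: "map fst (play_hist \<sigma> \<tau> n) = prefix (play_x \<sigma> \<tau>) n"
  by (rule nth_equalityI) (auto simp: play_hist_nth)

lemma legal_play_in_branches:
  assumes "is_tree A T" "T \<noteq> {}" "legal_stratI T \<sigma>"
  shows "play_x \<sigma> \<tau> \<in> branches T"
  unfolding branches_iff
proof
  fix n show "prefix (play_x \<sigma> \<tau>) n \<in> T"
  proof (induction n)
    case 0
    then show ?case using Nil_in_tree assms by simp
  next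
    case (Suc n)
    then have "map fst (play_hist \<sigma> \<tau> n) @ [\<sigma> (play_hist \<sigma> \<tau> n)] \<in> T"
      using Suc assms(3) by (metis legal_stratI_def map_fst_play_hist)
    then show ?case by (metis map_fst_play_hist prefix_Suc play_x_eq)
  qed
qed

lemma limsup_ge_if_frequently:
  fixes X :: "nat \<Rightarrow> ereal"
  assumes "\<And>N. \<exists>n\<ge>N. C \<le> X n"
  shows "C \<le> limsup X"
proof (rule Limsup_greatest)
  fix P assume "eventually P sequentially"
  then obtain N where N: "\<And>n. n \<ge> N \<Longrightarrow> P n" by (auto simp: eventually_sequentially)
  obtain n where "n \<ge> N" "C \<le> X n" using assms by blast
  then show "C \<le> Sup (X ` Collect P)" using N by (meson Sup_upper2 image_eqI mem_Collect_eq)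
qed

lemma limsup_le_if_eventually:
  fixes X :: "nat \<Rightarrow> ereal"
  assumes "\<And>n. n \<ge> N \<Longrightarrow> X n \<le> C"
  shows "limsup X \<le> C"
  by (rule Limsup_bounded) (auto simp: eventually_sequentially intro: assms)

section \<open>Continuous images of Baire space and G_delta separation\<close>

lemma topspace_baire_topology: "topspace baire_topology = UNIV"
  by (simp add: baire_topology_def topspace_product_topology)

lemma continuous_map_modulus:
  assumes cont: "continuous_map baire_topology (branch_topology T) g"
    and gy: "g y \<in> branches T"
  shows "\<exists>M. \<forall>y'. prefix y' M = prefix y M \<longrightarrow> prefix (g y') L = prefix (g y) L"
proof -
  define u where "u = prefix (g y) L"
  have "openin (branch_topology T) (cyl T u)"
    unfolding branch_topology_def openin_topology_generated_by_iff
    using gy by (intro generate_topology_on.Basis) (simp add: branches_iff u_def)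
  from openin_continuous_map_preimage[OF cont this]
  have "openin baire_topology {z. g z \<in> cyl T u}" by (simp add: topspace_baire_topology)
  moreover have "y \<in> {z. g z \<in> cyl T u}"
    using gy by (simp add: cyl_iff extending_def u_def)
  ultimately obtain V where V: "finite {i \<in> UNIV. V i \<noteq> topspace (euclidean::nat topology)}"
      "y \<in> PiE UNIV V" "PiE UNIV V \<subseteq> {z. g z \<in> cyl T u}"
    unfolding baire_topology_def openin_product_topology_alt by blast
  then obtain M where M: "\<And>i. V i \<noteq> UNIV \<Longrightarrow> i < M"
    unfolding finite_nat_set_iff_bounded by auto
  have "prefix (g y') L = prefix (g y) L" if "prefix y' M = prefix y M" for y'
  proof -
    have "y' i \<in> V i" for i
    proof (cases "V i = UNIV")
      case False
      then have "y' i = y i" using M that by (simp add: prefix_eq_iff)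
      then show ?thesis using V(2) by (simp add: PiE_UNIV_domain Pi_def)
    qed simp
    then have "y' \<in> PiE UNIV V" by (simp add: PiE_UNIV_domain)
    then have "g y' \<in> cyl T u" using V(3) by blast
    then show ?thesis by (simp add: cyl_iff extending_def u_def)
  qed
  then show ?thesis by blast
qed

lemma eq_image_if_approximated:
  assumes modulus: "\<And>L. \<exists>M. \<forall>y'. prefix y' M = prefix y M \<longrightarrow> prefix (g y') L = prefix (g y) L"
    and approx: "\<And>M L. \<exists>y'. prefix y' M = prefix y M \<and> prefix (g y') L = prefix x L"
  shows "x = g y"
proof (rule eq_if_prefixes_eq)
  fix L
  obtain M where "\<And>y'. prefix y' M = prefix y M \<Longrightarrow> prefix (g y') L = prefix (g y) L"
    using modulus by blast
  then show "prefix x L = prefix (g y) L" using approx[of M L] by metis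
qed

text \<open>S misses a G_delta set containing B; the G_delta sets are the countable intersections of
  the open sets cylinders Z.\<close>

definition Gdelta_separated :: "(nat \<Rightarrow> 'a) set \<Rightarrow> (nat \<Rightarrow> 'a) set \<Rightarrow> bool" where
  "Gdelta_separated B S \<longleftrightarrow>
     (\<exists>ZS. countable ZS \<and> (\<forall>Z\<in>ZS. B \<subseteq> cylinders Z) \<and> (\<forall>x\<in>S. \<exists>Z\<in>ZS. x \<notin> cylinders Z))"

lemma Gdelta_separated_subset:
  "Gdelta_separated B S \<Longrightarrow> S' \<subseteq> S \<Longrightarrow> Gdelta_separated B S'"
  unfolding Gdelta_separated_def by (meson subsetD)

lemma Gdelta_separated_empty: "Gdelta_separated B {}"
  unfolding Gdelta_separated_def by (intro exI[of _ "{}"]) simp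

lemma Gdelta_separated_if_open_disjoint:
  "B \<subseteq> cylinders Z \<Longrightarrow> S \<inter> cylinders Z = {} \<Longrightarrow> Gdelta_separated B S"
  unfolding Gdelta_separated_def by (intro exI[of _ "{Z}"]) (simp add: disjoint_iff)

lemma Gdelta_separated_UN:
  assumes "countable I" "\<And>i. i \<in> I \<Longrightarrow> Gdelta_separated B (S i)"
  shows "Gdelta_separated B (\<Union>i\<in>I. S i)"
proof -
  have "\<forall>i\<in>I. \<exists>ZS. countable ZS \<and> (\<forall>Z\<in>ZS. B \<subseteq> cylinders Z) \<and>
      (\<forall>x\<in>S i. \<exists>Z\<in>ZS. x \<notin> cylinders Z)"
    using assms(2) unfolding Gdelta_separated_def by simp
  then obtain ZS where ZS: "\<forall>i\<in>I. countable (ZS i) \<and> (\<forall>Z\<in>ZS i. B \<subseteq> cylinders Z) \<and>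
      (\<forall>x\<in>S i. \<exists>Z\<in>ZS i. x \<notin> cylinders Z)"
    by (metis bchoice)
  have "countable (\<Union>i\<in>I. ZS i)" using assms(1) ZS by (simp add: countable_UN)
  moreover have "\<forall>Z\<in>(\<Union>i\<in>I. ZS i). B \<subseteq> cylinders Z" using ZS by simp
  moreover have "\<forall>x\<in>(\<Union>i\<in>I. S i). \<exists>Z\<in>(\<Union>i\<in>I. ZS i). x \<notin> cylinders Z" using ZS by fast
  ultimately show ?thesis unfolding Gdelta_separated_def by blast
qed

lemma Gdelta_separated_Un:
  "Gdelta_separated B S \<Longrightarrow> Gdelta_separated B S' \<Longrightarrow> Gdelta_separated B (S \<union> S')"
proof -
  assume "Gdelta_separated B S" "Gdelta_separated B S'"
  then obtain ZS ZS' where "countable ZS" "\<forall>Z\<in>ZS. B \<subseteq> cylinders Z" "\<forall>x\<in>S. \<exists>Z\<in>ZS. x \<notin> cylinders Z"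
    "countable ZS'" "\<forall>Z\<in>ZS'. B \<subseteq> cylinders Z" "\<forall>x\<in>S'. \<exists>Z\<in>ZS'. x \<notin> cylinders Z"
    unfolding Gdelta_separated_def by blast
  then show ?thesis unfolding Gdelta_separated_def by (intro exI[of _ "ZS \<union> ZS'"]) auto
qed

lemma Gdelta_separated_sequence:
  assumes "Gdelta_separated B S"
  obtains Z :: "nat \<Rightarrow> 'a list set"
  where "\<forall>m. B \<subseteq> cylinders (Z m)" "\<forall>x\<in>S. \<exists>m. x \<notin> cylinders (Z m)"
proof -
  obtain ZS where ZS: "countable ZS" "\<forall>Z\<in>ZS. B \<subseteq> cylinders Z" "\<forall>x\<in>S. \<exists>Z\<in>ZS. x \<notin> cylinders Z"
    using assms by (auto simp: Gdelta_separated_def)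
  define ZS' where "ZS' = insert {[]} ZS"
  have ZS': "countable ZS'" "ZS' \<noteq> {}" using ZS(1) by (auto simp: ZS'_def)
  show ?thesis
  proof (rule that)
    show "\<forall>m. B \<subseteq> cylinders (from_nat_into ZS' m)"
    proof
      fix m
      have "from_nat_into ZS' m \<in> ZS'" by (rule from_nat_into[OF ZS'(2)])
      then show "B \<subseteq> cylinders (from_nat_into ZS' m)" using ZS(2) cylinders_Nil by (auto simp: ZS'_def)
    qed
    show "\<forall>x\<in>S. \<exists>m. x \<notin> cylinders (from_nat_into ZS' m)"
    proof
      fix x assume "x \<in> S"
      then obtain Z where "Z \<in> ZS'" "x \<notin> cylinders Z" using ZS(3) by (auto simp: ZS'_def)
      then show "\<exists>m. x \<notin> cylinders (from_nat_into ZS' m)" by (metis from_nat_into_surj[OF ZS'(1)])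
    qed
  qed
qed

lemma subset_cylinders_if_locally:
  assumes "B \<subseteq> branches T"
    and "\<And>b. b \<in> B \<inter> cyl T u \<Longrightarrow> \<exists>n\<ge>length u. P (prefix b n)"
  shows "B \<subseteq> cylinders ({w. length w = length u \<and> w \<noteq> u} \<union> {v\<in>T. take (length u) v = u \<and> P v})"
proof
  fix b assume b: "b \<in> B"
  show "b \<in> cylinders ({w. length w = length u \<and> w \<noteq> u} \<union> {v\<in>T. take (length u) v = u \<and> P v})"
  proof (cases "b \<in> extending u")
    case False
    then show ?thesis unfolding cylinders_def by (intro CollectI exI[of _ "length u"]) (simp add: extending_def)
  next
    case True
    then have "b \<in> B \<inter> cyl T u" using b assms(1) by (auto simp: cyl_iff)
    then obtain n where "n \<ge> length u" "P (prefix b n)" using assms(2) by blast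
    moreover have "prefix b n \<in> T" using b assms(1) by (auto simp: branches_iff)
    ultimately show ?thesis
      using True unfolding cylinders_def by (intro CollectI exI[of _ n]) (simp add: extending_def min_def)
  qed
qed

lemma Gdelta_separated_if_locally_separated:
  assumes "countable T" "B \<subseteq> branches T"
    and local: "\<And>b. b \<in> B \<inter> cyl T u \<Longrightarrow> \<exists>n\<ge>length u. Gdelta_separated B (S \<inter> cyl T (prefix b n))"
  shows "Gdelta_separated B (S \<inter> cyl T u)"
proof -
  define W where "W = {v\<in>T. take (length u) v = u \<and> Gdelta_separated B (S \<inter> cyl T v)}"
  define Z where "Z = {w. length w = length u \<and> w \<noteq> u} \<union> W"
  have "B \<subseteq> cylinders Z"
    unfolding Z_def W_def using assms(2) local by (rule subset_cylinders_if_locally)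
  then have "Gdelta_separated B (S \<inter> cyl T u - cylinders Z)"
    by (rule Gdelta_separated_if_open_disjoint) auto
  moreover have "countable W" using assms(1) by (rule countable_subset[rotated]) (auto simp: W_def)
  then have "Gdelta_separated B (\<Union>v\<in>W. S \<inter> cyl T v)"
    by (rule Gdelta_separated_UN) (simp add: W_def)
  moreover have "S \<inter> cyl T u \<subseteq> (S \<inter> cyl T u - cylinders Z) \<union> (\<Union>v\<in>W. S \<inter> cyl T v)"
  proof
    fix x assume x: "x \<in> S \<inter> cyl T u"
    show "x \<in> (S \<inter> cyl T u - cylinders Z) \<union> (\<Union>v\<in>W. S \<inter> cyl T v)"
    proof (cases "x \<in> cylinders Z")
      case True
      then obtain n where "prefix x n \<in> Z" by (auto simp: cylinders_def)
      moreover have "prefix x (length u) = u" using x by (simp add: cyl_iff extending_def)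
      ultimately have "prefix x n \<in> W" by (auto simp: Z_def)
      moreover have "x \<in> cyl T (prefix x n)" using x by (auto simp: cyl_iff extending_def)
      ultimately show ?thesis using x by blast
    next
      case False
      with x show ?thesis by simp
    qed
  qed
  ultimately show ?thesis
    by (rule Gdelta_separated_subset[OF Gdelta_separated_Un])
qed

section \<open>Player I wins against an inseparable analytic set\<close>

locale inseparable_analytic =
  fixes A :: "'a set" and T :: "'a list set" and B :: "(nat \<Rightarrow> 'a) set"
    and g :: "(nat \<Rightarrow> nat) \<Rightarrow> nat \<Rightarrow> 'a"
  assumes tree: "is_tree A T" "T \<noteq> {}" "pruned T" "countable T"
    and B_branches: "B \<subseteq> branches T"
    and continuous: "continuous_map baire_topology (branch_topology T) g"
    and g_branches: "range g \<subseteq> branches T"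
    and inseparable: "\<not> Gdelta_separated B (range g \<inter> branches T)"
begin

definition unseparated :: "'a list \<Rightarrow> nat list \<Rightarrow> bool" where
  "unseparated u s \<longleftrightarrow> \<not> Gdelta_separated B (g ` extending s \<inter> cyl T u)"

lemma unseparated_Nil: "unseparated [] []"
  using inseparable by (simp add: unseparated_def cyl_Nil extending_def Int_commute)

lemma unseparated_snoc:
  assumes "unseparated u s"
  shows "\<exists>k. unseparated u (s @ [k])"
proof (rule ccontr)
  assume "\<not> ?thesis"
  then have "Gdelta_separated B (\<Union>k. g ` extending (s @ [k]) \<inter> cyl T u)"
    by (intro Gdelta_separated_UN) (auto simp: unseparated_def)
  moreover have "(\<Union>k. g ` extending (s @ [k]) \<inter> cyl T u) = g ` extending s \<inter> cyl T u"
    by (subst (2) extending_eq_UN_snoc) blast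
  ultimately show False using assms by (simp add: unseparated_def)
qed

lemma unseparated_nonempty:
  assumes "unseparated u s"
  obtains y where "y \<in> extending s" "g y \<in> cyl T u"
proof -
  have "g ` extending s \<inter> cyl T u \<noteq> {}"
    using assms Gdelta_separated_empty unfolding unseparated_def by metis
  then show ?thesis using that by blast
qed

lemma unseparated_along_branch:
  assumes "unseparated u s"
  shows "\<exists>b. b \<in> B \<inter> cyl T u \<and> (\<forall>n\<ge>length u. unseparated (prefix b n) s)"
  using assms Gdelta_separated_if_locally_separated[OF tree(4) B_branches]
  unfolding unseparated_def by blast

definition next_branch :: "'a list \<Rightarrow> nat list \<Rightarrow> nat \<Rightarrow> 'a" where
  "next_branch u s = (SOME b. b \<in> B \<inter> cyl T u \<and> (\<forall>n\<ge>length u. unseparated (prefix b n) s))"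

definition next_digit :: "'a list \<Rightarrow> nat list \<Rightarrow> nat" where
  "next_digit u s = (SOME k. unseparated u (s @ [k]))"

lemma next_branch:
  assumes "unseparated u s"
  shows "next_branch u s \<in> B \<inter> cyl T u" "n \<ge> length u \<Longrightarrow> unseparated (prefix (next_branch u s) n) s"
  using someI_ex[OF unseparated_along_branch[OF assms]] unfolding next_branch_def by blast+

lemma next_digit: "unseparated u s \<Longrightarrow> unseparated u (s @ [next_digit u s])"
  unfolding next_digit_def using unseparated_snoc by (rule someI_ex)

text \<open>A target (b, s) pairs the branch b of B that Player I follows with a code s such that
  g[N_s] is not separated from B near the current position.\<close>

definition retarget :: "real \<Rightarrow> nat \<Rightarrow> real \<Rightarrow> (nat \<Rightarrow> 'a) \<times> nat list \<Rightarrow> (nat \<Rightarrow> 'a) \<times> nat list" where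
  "retarget m n v bs = (if m < v then
     (let u = prefix (fst bs) (Suc n); s = snd bs @ [next_digit u (snd bs)] in (next_branch u s, s))
   else bs)"

primrec target :: "real \<Rightarrow> ('a \<times> real) list \<Rightarrow> nat \<Rightarrow> (nat \<Rightarrow> 'a) \<times> nat list" where
  "target m h 0 = (next_branch [] [], [])"
| "target m h (Suc n) = retarget m n (snd (h ! n)) (target m h n)"

text \<open>The fallback move is never used along the intended run; it only makes the strategy legal.\<close>

definition strategy :: "real \<Rightarrow> 'a stratI" where
  "strategy m h = (let b = fst (target m h (length h)) in
     if map fst h @ [b (length h)] \<in> T then b (length h) else (SOME a. map fst h @ [a] \<in> T))"

lemma strategy_legal: "legal_stratI T (strategy m)"
  unfolding legal_stratI_def
proof (intro allI impI)
  fix h :: "('a \<times> real) list" assume "map fst h \<in> T"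
  then obtain a where "map fst h @ [a] \<in> T" using pruned_tree_snoc[OF tree(1,3)] by blast
  then have "map fst h @ [SOME a. map fst h @ [a] \<in> T] \<in> T" by (rule someI)
  then show "map fst h @ [strategy m h] \<in> T" by (auto simp: strategy_def Let_def)
qed

lemma target_cong: "(\<And>i. i < n \<Longrightarrow> h ! i = h' ! i) \<Longrightarrow> target m h n = target m h' n"
  by (induction n) auto

definition run_target :: "real \<Rightarrow> 'a stratII \<Rightarrow> nat \<Rightarrow> (nat \<Rightarrow> 'a) \<times> nat list" where
  "run_target m \<tau> n = target m (play_hist (strategy m) \<tau> n) n"

lemma run_target_0: "run_target m \<tau> 0 = (next_branch [] [], [])"
  by (simp add: run_target_def)

lemma run_target_Suc:
  "run_target m \<tau> (Suc n) = retarget m n (play_v (strategy m) \<tau> n) (run_target m \<tau> n)"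
proof -
  have "target m (play_hist (strategy m) \<tau> (Suc n)) n = target m (play_hist (strategy m) \<tau> n) n"
    by (rule target_cong) (metis less_SucI play_hist_nth)
  moreover have "snd (play_hist (strategy m) \<tau> (Suc n) ! n) = play_v (strategy m) \<tau> n"
    by (simp only: play_hist_nth lessI snd_conv)
  ultimately show ?thesis unfolding run_target_def target.simps(2) by (simp only:)
qed

definition on_target :: "(nat \<Rightarrow> 'a) \<Rightarrow> nat \<Rightarrow> (nat \<Rightarrow> 'a) \<times> nat list \<Rightarrow> bool" where
  "on_target x n bs \<longleftrightarrow> fst bs \<in> B \<and> prefix (fst bs) n = prefix x n \<and>
     (\<forall>n'\<ge>n. unseparated (prefix (fst bs) n') (snd bs))"

lemma on_target_retarget:
  assumes "on_target x n bs" "x n = fst bs n"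
  shows "on_target x (Suc n) (retarget m n v bs)"
proof -
  obtain b s where bs: "bs = (b, s)" by fastforce
  have b: "b \<in> B" and unsep: "\<And>n'. n' \<ge> n \<Longrightarrow> unseparated (prefix b n') s"
    using assms(1) by (auto simp: on_target_def bs)
  have pre: "prefix b (Suc n) = prefix x (Suc n)"
    using assms by (simp add: on_target_def bs prefix_Suc)
  show ?thesis
  proof (cases "m < v")
    case True
    define u where "u = prefix b (Suc n)"
    define s' where "s' = s @ [next_digit u s]"
    have "unseparated u s'" unfolding s'_def u_def by (rule next_digit) (simp add: unsep)
    note nb = next_branch[OF this]
    have "retarget m n v bs = (next_branch u s', s')"
      using True by (simp add: retarget_def bs u_def s'_def Let_def)
    moreover have "prefix (next_branch u s') (Suc n) = prefix x (Suc n)"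
      using nb(1) pre by (simp add: cyl_iff extending_def u_def)
    ultimately show ?thesis using nb by (auto simp: on_target_def u_def)
  next
    case False
    then show ?thesis using b unsep pre by (simp add: retarget_def bs on_target_def)
  qed
qed

lemma run_on_target: "on_target (play_x (strategy m) \<tau>) n (run_target m \<tau> n)"
proof -
  let ?x = "play_x (strategy m) \<tau>"
  have follows: "?x n = fst (run_target m \<tau> n) n" if "on_target ?x n (run_target m \<tau> n)" for n
  proof -
    let ?b = "fst (run_target m \<tau> n)"
    have "prefix ?b (Suc n) \<in> T" using that B_branches by (auto simp: on_target_def branches_iff)
    moreover have "map fst (play_hist (strategy m) \<tau> n) = prefix ?b n"
      using that by (simp add: on_target_def map_fst_play_hist)
    ultimately have "map fst (play_hist (strategy m) \<tau> n) @ [?b n] \<in> T" by (simp add: prefix_Suc)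
    then show ?thesis by (simp add: play_x_eq strategy_def run_target_def)
  qed
  show ?thesis
  proof (induction n)
    case 0
    then show ?case
      using next_branch[OF unseparated_Nil] by (simp add: on_target_def run_target_0)
  next
    case (Suc n)
    then show ?case using on_target_retarget follows by (simp add: run_target_Suc)
  qed
qed

lemma run_in_B_if_eventually_low:
  assumes low: "\<And>t. t \<ge> N \<Longrightarrow> play_v (strategy m) \<tau> t \<le> m"
  shows "play_x (strategy m) \<tau> \<in> B"
proof -
  have const: "run_target m \<tau> t = run_target m \<tau> N" if "t \<ge> N" for t
    using that
  proof (induction rule: dec_induct)
    case (step t)
    then show ?case using low[of t] by (simp add: run_target_Suc retarget_def)
  qed simp
  have "prefix (play_x (strategy m) \<tau>) t = prefix (fst (run_target m \<tau> N)) t" if "t \<ge> N" for t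
    using run_on_target[of m \<tau> t] const[OF that] by (simp add: on_target_def)
  then have "play_x (strategy m) \<tau> = fst (run_target m \<tau> N)" by (rule eq_if_prefixes_eq)
  then show ?thesis using run_on_target[of m \<tau> N] by (simp add: on_target_def)
qed

lemma run_code_Suc:
  "snd (run_target m \<tau> (Suc t)) = (if m < play_v (strategy m) \<tau> t
     then snd (run_target m \<tau> t) @ [next_digit (prefix (fst (run_target m \<tau> t)) (Suc t)) (snd (run_target m \<tau> t))]
     else snd (run_target m \<tau> t))"
  by (simp add: run_target_Suc retarget_def Let_def)

lemma run_code_length_mono: "mono (\<lambda>t. length (snd (run_target m \<tau> t)))"
  by (rule mono_iff_le_Suc[THEN iffD2]) (simp add: run_code_Suc)

lemma run_code_unbounded:
  assumes high: "\<And>N. \<exists>t\<ge>N. m < play_v (strategy m) \<tau> t"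
  shows "\<exists>t. M \<le> length (snd (run_target m \<tau> t))"
proof (induction M)
  case (Suc M)
  then obtain t0 where "M \<le> length (snd (run_target m \<tau> t0))" by blast
  moreover obtain t where "t \<ge> t0" "m < play_v (strategy m) \<tau> t" using high by blast
  ultimately have "Suc M \<le> length (snd (run_target m \<tau> (Suc t)))"
    using monoD[OF run_code_length_mono[of m \<tau>] \<open>t \<ge> t0\<close>] by (simp add: run_code_Suc)
  then show ?case by blast
qed simp

lemma run_in_range_if_frequently_high:
  assumes high: "\<And>N. \<exists>t\<ge>N. m < play_v (strategy m) \<tau> t"
  shows "play_x (strategy m) \<tau> \<in> range g"
proof -
  define x where "x = play_x (strategy m) \<tau>"
  define sn where "sn t = snd (run_target m \<tau> t)" for t
  have chain: "take (length (sn t)) (sn (Suc t)) = sn t" for t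
    by (simp add: sn_def run_code_Suc)
  have unbounded: "\<exists>t. M \<le> length (sn t)" for M
    using run_code_unbounded[OF high] by (simp add: sn_def)
  obtain y where y: "\<And>t. prefix y (length (sn t)) = sn t"
    using prefix_chain_limit[OF chain unbounded] by blast
  have "x = g y"
  proof (rule eq_image_if_approximated[where g = g and y = y])
    show "\<exists>M. \<forall>y'. prefix y' M = prefix y M \<longrightarrow> prefix (g y') L = prefix (g y) L" for L
    proof -
      have "g y \<in> branches T" using g_branches by auto
      then show ?thesis by (rule continuous_map_modulus[OF continuous])
    qed
    show "\<exists>y'. prefix y' M = prefix y M \<and> prefix (g y') L = prefix x L" for M L
    proof -
      obtain t0 where t0: "M \<le> length (sn t0)" using unbounded by blast
      define t where "t = max t0 L"
      have "M \<le> length (sn t)"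
        using t0 monoD[OF run_code_length_mono[of m \<tau>], of t0 t] by (simp add: t_def sn_def)
      have "unseparated (prefix x t) (sn t)"
        using run_on_target[of m \<tau> t] by (auto simp: on_target_def x_def sn_def)
      then obtain y' where y': "y' \<in> extending (sn t)" "g y' \<in> cyl T (prefix x t)"
        by (rule unseparated_nonempty)
      have "prefix y' (length (sn t)) = prefix y (length (sn t))"
        using y'(1) y[of t] by (simp add: extending_def)
      then have "prefix y' M = prefix y M" using \<open>M \<le> length (sn t)\<close> by (rule prefix_eq_le)
      moreover have "prefix (g y') t = prefix x t" using y'(2) by (simp add: cyl_iff extending_def)
      then have "prefix (g y') L = prefix x L" by (rule prefix_eq_le) (simp add: t_def)
      ultimately show ?thesis by (intro exI[of _ y'] conjI)
    qed
  qed
  then show ?thesis by (simp add: x_def)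
qed

lemma strategy_winning:
  assumes B: "B = {x \<in> branches T. q \<le> f x}" and g: "range g = {x \<in> branches T. f x < p}"
    and "p < m" "m < q"
  shows "winning_I T f (strategy m)"
  unfolding winning_I_def
proof (intro conjI allI strategy_legal)
  fix \<tau>
  let ?x = "play_x (strategy m) \<tau>" and ?v = "play_v (strategy m) \<tau>"
  show "\<not> II_wins_run f (strategy m) \<tau>"
  proof (cases "\<exists>N. \<forall>t\<ge>N. ?v t \<le> m")
    case True
    then obtain N where N: "\<And>t. t \<ge> N \<Longrightarrow> ?v t \<le> m" by blast
    have "?x \<in> B" using N by (rule run_in_B_if_eventually_low)
    then have "m < f ?x" using B \<open>m < q\<close> by auto
    have "limsup (\<lambda>t. ereal (?v t)) \<le> ereal m"
      using N by (intro limsup_le_if_eventually) simp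
    also have "\<dots> < ereal (f ?x)" using \<open>m < f ?x\<close> by simp
    finally show ?thesis unfolding II_wins_run_def by simp
  next
    case False
    then have high: "\<And>N. \<exists>t\<ge>N. m < ?v t" by (meson not_le)
    then have "?x \<in> range g" by (rule run_in_range_if_frequently_high)
    then have "f ?x < m" using g \<open>p < m\<close> by auto
    then have "ereal (f ?x) < ereal m" by simp
    also have "\<dots> \<le> limsup (\<lambda>t. ereal (?v t))"
    proof (rule limsup_ge_if_frequently)
      show "\<exists>t\<ge>N. ereal m \<le> ereal (?v t)" for N using high[of N] by (auto intro: less_imp_le)
    qed
    finally show ?thesis unfolding II_wins_run_def by simp
  qed
qed

end

section \<open>The counting strategy of Player II\<close>

definition rat_enum :: "nat \<Rightarrow> real" where
  "rat_enum i = real_of_rat (from_nat i)"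

lemma rat_enum_surj: "r \<in> \<rat> \<Longrightarrow> \<exists>j. rat_enum j = r"
  by (metis Rats_cases from_nat_to_nat rat_enum_def)

text \<open>Here the intersection of the open sets cylinders (U k i), i \<in> \<nat>, is meant to be
  {f \<ge> q_k}. The counter progress U u j is the number of levels n < |u| by which u has met
  all cylinders (U k i) with i, k \<le> n and q_k \<le> q_j. Player II claims the largest
  q_j whose counter has just grown beyond j, and -|u| if there is none: along a run x the
  counters of the q_j \<le> f x grow without bound while the others stay bounded, so the
  limsup of the claims is f x.\<close>

definition covered :: "(nat \<Rightarrow> nat \<Rightarrow> 'a list set) \<Rightarrow> 'a list \<Rightarrow> nat \<Rightarrow> nat \<Rightarrow> bool" where
  "covered U u j n \<longleftrightarrow>
     (\<forall>k\<le>n. rat_enum k \<le> rat_enum j \<longrightarrow> (\<forall>i\<le>n. \<exists>l\<le>length u. take l u \<in> U k i))"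

definition progress :: "(nat \<Rightarrow> nat \<Rightarrow> 'a list set) \<Rightarrow> 'a list \<Rightarrow> nat \<Rightarrow> nat" where
  "progress U u j = card {n. n < length u \<and> covered U u j n}"

definition advanced :: "(nat \<Rightarrow> nat \<Rightarrow> 'a list set) \<Rightarrow> 'a list \<Rightarrow> 'a list \<Rightarrow> nat \<Rightarrow> bool" where
  "advanced U w u j \<longleftrightarrow> j < progress U u j \<and> progress U w j < progress U u j"

definition claim :: "(nat \<Rightarrow> nat \<Rightarrow> 'a list set) \<Rightarrow> 'a list \<Rightarrow> 'a list \<Rightarrow> real" where
  "claim U w u = (if \<exists>j. advanced U w u j then Max (rat_enum ` {j. advanced U w u j})
     else - real (length u))"

definition counting_strategy :: "(nat \<Rightarrow> nat \<Rightarrow> 'a list set) \<Rightarrow> 'a stratII" where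
  "counting_strategy U h a = claim U (map fst h) (map fst h @ [a])"

lemma covered_prefix_iff:
  "covered U (prefix x t) j n \<longleftrightarrow>
     (\<forall>k\<le>n. rat_enum k \<le> rat_enum j \<longrightarrow> (\<forall>i\<le>n. \<exists>l\<le>t. prefix x l \<in> U k i))"
  unfolding covered_def by (auto simp: min_def)

lemma covered_antimono: "covered U u j n \<Longrightarrow> n' \<le> n \<Longrightarrow> covered U u j n'"
  unfolding covered_def by (meson order_trans)

lemma less_progress_iff: "n < progress U u j \<longleftrightarrow> n < length u \<and> covered U u j n"
proof -
  define S where "S = {n. n < length u \<and> covered U u j n}"
  have down: "n' \<in> S" if "n \<in> S" "n' \<le> n" for n n'
    using that covered_antimono by (fastforce simp: S_def)
  have "finite S" by (simp add: S_def)
  show ?thesis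
  proof
    assume "n < progress U u j"
    show "n < length u \<and> covered U u j n"
    proof (rule ccontr)
      assume "\<not> ?thesis"
      have "S \<subseteq> {..<n}"
      proof
        fix m assume "m \<in> S"
        show "m \<in> {..<n}"
        proof (rule ccontr)
          assume "m \<notin> {..<n}"
          then have "n \<in> S" using down[OF \<open>m \<in> S\<close>] by simp
          then show False using \<open>\<not> (n < length u \<and> covered U u j n)\<close> by (simp add: S_def)
        qed
      qed
      then have "card S \<le> n" by (metis card_lessThan card_mono finite_lessThan)
      then show False using \<open>n < progress U u j\<close> by (simp add: progress_def S_def)
    qed
  next
    assume "n < length u \<and> covered U u j n"
    then have "n \<in> S" by (simp add: S_def)
    then have "{..n} \<subseteq> S" using down by auto
    then have "card {..n} \<le> card S" using \<open>finite S\<close> by (rule card_mono[rotated])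
    then show "n < progress U u j" by (simp add: progress_def S_def)
  qed
qed

lemma progress_le_length: "progress U u j \<le> length u"
  using less_progress_iff[of "length u" U u j] by (cases "length u < progress U u j") auto

lemma covered_prefix_mono:
  "covered U (prefix x t) j n \<Longrightarrow> t \<le> t' \<Longrightarrow> covered U (prefix x t') j n"
  unfolding covered_prefix_iff by (meson le_trans)

lemma progress_prefix_mono:
  assumes "t \<le> t'"
  shows "progress U (prefix x t) j \<le> progress U (prefix x t') j"
proof (rule ccontr)
  let ?n = "progress U (prefix x t') j"
  assume "\<not> ?thesis"
  then have "?n < t" "covered U (prefix x t) j ?n"
    using less_progress_iff[of ?n U "prefix x t" j] by auto
  then have "?n < t'" "covered U (prefix x t') j ?n"
    using assms covered_prefix_mono[OF _ assms] by auto
  then show False using less_progress_iff[of ?n U "prefix x t'" j] by simp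
qed

lemma finite_advanced: "finite {j. advanced U w u j}"
proof (rule finite_subset)
  show "{j. advanced U w u j} \<subseteq> {..<length u}"
    using progress_le_length by (auto simp: advanced_def intro: less_le_trans)
qed simp

lemma claim_ge:
  assumes "advanced U w u j"
  shows "rat_enum j \<le> claim U w u"
proof -
  have "rat_enum j \<le> Max (rat_enum ` {j. advanced U w u j})"
    using assms by (intro Max_ge finite_imageI finite_advanced) simp
  then show ?thesis using assms by (auto simp: claim_def)
qed

lemma claim_cases:
  obtains "claim U w u = - real (length u)" | j where "advanced U w u j" "claim U w u = rat_enum j"
proof (cases "\<exists>j. advanced U w u j")
  case True
  then have "Max (rat_enum ` {j. advanced U w u j}) \<in> rat_enum ` {j. advanced U w u j}"
    using finite_advanced by (intro Max_in) auto
  then obtain j where "advanced U w u j" "rat_enum j = Max (rat_enum ` {j. advanced U w u j})"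
    by auto
  then show ?thesis using True that(2) by (simp add: claim_def)
qed (use that(1) in \<open>simp add: claim_def\<close>)

definition claims :: "(nat \<Rightarrow> nat \<Rightarrow> 'a list set) \<Rightarrow> (nat \<Rightarrow> 'a) \<Rightarrow> nat \<Rightarrow> real" where
  "claims U x t = claim U (prefix x t) (prefix x (Suc t))"

lemma crossing_point:
  fixes a :: "nat \<Rightarrow> nat"
  assumes "a N \<le> c" "c < a t'" "N \<le> t'"
  obtains t where "N \<le> t" "a t \<le> c" "c < a (Suc t)"
proof -
  define t1 where "t1 = (LEAST t. N \<le> t \<and> c < a t)"
  have "N \<le> t1 \<and> c < a t1" unfolding t1_def by (rule LeastI[of _ t']) (use assms in simp)
  then have t1: "N \<le> t1" "c < a t1" by auto
  then obtain t where t: "t1 = Suc t" "N \<le> t" using assms(1) by (cases t1) (auto simp: le_Suc_eq)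
  have "a t \<le> c" using not_less_Least[of t "\<lambda>t. N \<le> t \<and> c < a t"] t by (simp add: t1_def)
  then show ?thesis using that t t1 by simp
qed

lemma mono_bounded_eventually_const:
  fixes a :: "nat \<Rightarrow> nat"
  assumes "mono a" "\<And>t. a t \<le> M"
  shows "\<exists>N. \<forall>t\<ge>N. a t = a N"
proof -
  have fin: "finite (range a)"
    by (rule finite_subset[of _ "{..M}"]) (use assms(2) in auto)
  then have "Max (range a) \<in> range a" by (rule Max_in) simp
  then obtain N where N: "a N = Max (range a)" by (metis imageE)
  have "a t = a N" if "t \<ge> N" for t
  proof (rule antisym)
    show "a t \<le> a N" unfolding N by (rule Max_ge[OF fin]) simp
    show "a N \<le> a t" using assms(1) that by (rule monoD)
  qed
  then show ?thesis by (intro exI[of _ N] allI impI)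
qed

lemma progress_unbounded:
  assumes "\<And>k i. rat_enum k \<le> rat_enum j \<Longrightarrow> x \<in> cylinders (U k i)"
  shows "\<exists>t. c < progress U (prefix x t) j"
proof -
  define l where "l k i = (SOME l. prefix x l \<in> U k i)" for k i
  have l: "prefix x (l k i) \<in> U k i" if "rat_enum k \<le> rat_enum j" for k i
    unfolding l_def by (rule someI_ex) (use assms[OF that, of i] in \<open>simp add: cylinders_def\<close>)
  define t where "t = max (Suc c) (Max ((\<lambda>(k, i). l k i) ` ({..c} \<times> {..c})))"
  have "l k i \<le> t" if "k \<le> c" "i \<le> c" for k i
  proof -
    have "l k i \<in> (\<lambda>(k, i). l k i) ` ({..c} \<times> {..c})" using that by force
    then have "l k i \<le> Max ((\<lambda>(k, i). l k i) ` ({..c} \<times> {..c}))" by (rule Max_ge[rotated]) simp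
    then show ?thesis by (simp add: t_def)
  qed
  then have "covered U (prefix x t) j c"
    unfolding covered_prefix_iff using l by (meson order_refl)
  then have "c < progress U (prefix x t) j" by (simp add: less_progress_iff t_def)
  then show ?thesis ..
qed

lemma limsup_claims_ge:
  assumes "\<And>k i. rat_enum k \<le> rat_enum j \<Longrightarrow> x \<in> cylinders (U k i)"
  shows "ereal (rat_enum j) \<le> limsup (\<lambda>t. ereal (claims U x t))"
proof (rule limsup_ge_if_frequently)
  fix N
  let ?p = "\<lambda>t. progress U (prefix x t) j"
  define c where "c = max (?p N) j"
  obtain t' where "c < ?p t'"
    using progress_unbounded[where U = U and x = x and j = j and c = c] assms by blast
  moreover have "N \<le> t'"
  proof (rule ccontr)
    assume "\<not> N \<le> t'"
    then have "?p t' \<le> ?p N" by (intro progress_prefix_mono) simp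
    then show False using \<open>c < ?p t'\<close> by (simp add: c_def)
  qed
  moreover have "?p N \<le> c" by (simp add: c_def)
  ultimately obtain t where "N \<le> t" "?p t \<le> c" "c < ?p (Suc t)"
    using crossing_point[of ?p N c t'] by blast
  moreover have "j \<le> c" by (simp add: c_def)
  ultimately have "advanced U (prefix x t) (prefix x (Suc t)) j"
    unfolding advanced_def by linarith
  then have "rat_enum j \<le> claims U x t" unfolding claims_def by (rule claim_ge)
  then show "\<exists>t\<ge>N. ereal (rat_enum j) \<le> ereal (claims U x t)" using \<open>N \<le> t\<close> by auto
qed

lemma progress_bounded_if_outside:
  assumes "x \<notin> cylinders (U k i\<^sub>0)" "rat_enum k \<le> rat_enum j"
  shows "progress U (prefix x t) j \<le> max k i\<^sub>0"
proof (rule ccontr)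
  assume "\<not> ?thesis"
  then have "max k i\<^sub>0 < progress U (prefix x t) j" by (simp only: not_le)
  then have "covered U (prefix x t) j (max k i\<^sub>0)" by (simp only: less_progress_iff)
  then have "\<exists>l\<le>t. prefix x l \<in> U k i\<^sub>0" using assms(2) unfolding covered_prefix_iff by simp
  then show False using assms(1) by (auto simp: cylinders_def)
qed

lemma limsup_claims_le:
  assumes outside: "x \<notin> cylinders (U k i\<^sub>0)"
  shows "limsup (\<lambda>t. ereal (claims U x t)) \<le> ereal (rat_enum k)"
proof -
  let ?p = "\<lambda>j t. progress U (prefix x t) j"
  define M where "M = max k i\<^sub>0"
  note bounded = progress_bounded_if_outside[where U = U and x = x and k = k, OF outside, folded M_def]
  have "\<exists>N. \<forall>t\<ge>N. ?p j t = ?p j N" if kj: "rat_enum k \<le> rat_enum j" for j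
  proof -
    have "mono (?p j)" by (rule monoI) (rule progress_prefix_mono)
    then show ?thesis using bounded[OF kj] by (rule mono_bounded_eventually_const)
  qed
  then have "\<forall>j. \<exists>N. rat_enum k \<le> rat_enum j \<longrightarrow> (\<forall>t\<ge>N. ?p j t = ?p j N)" by auto
  then obtain N where N: "\<forall>j. rat_enum k \<le> rat_enum j \<longrightarrow> (\<forall>t\<ge>N j. ?p j t = ?p j (N j))"
    by (rule choice[THEN exE])
  define N\<^sub>1 where "N\<^sub>1 = Max (N ` {..<M})"
  obtain N\<^sub>2 :: nat where N\<^sub>2: "- rat_enum k \<le> real N\<^sub>2" using real_arch_simple by blast
  have "claims U x t \<le> rat_enum k" if t: "t \<ge> max N\<^sub>1 N\<^sub>2" for t
  proof (cases rule: claim_cases[of U "prefix x t" "prefix x (Suc t)"])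
    case 1
    then show ?thesis using N\<^sub>2 t by (simp add: claims_def)
  next
    case (2 j)
    show ?thesis
    proof (rule ccontr)
      assume "\<not> claims U x t \<le> rat_enum k"
      then have kj: "rat_enum k \<le> rat_enum j" using 2 by (simp add: claims_def)
      have "j < M" using 2(1) bounded[OF kj, of "Suc t"] by (simp add: advanced_def)
      then have "N j \<le> N\<^sub>1" unfolding N\<^sub>1_def by (intro Max_ge) auto
      then have "N j \<le> t" using t by simp
      have stable: "\<forall>t'\<ge>N j. ?p j t' = ?p j (N j)" using N kj by blast
      have "?p j t = ?p j (Suc t)"
        using stable[rule_format, of t] stable[rule_format, of "Suc t"] \<open>N j \<le> t\<close> by simp
      then show False using 2(1) by (simp add: advanced_def)
    qed
  qed
  then show ?thesis by (intro limsup_le_if_eventually[of "max N\<^sub>1 N\<^sub>2"]) simp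
qed

lemma limsup_claims_eq:
  assumes "\<And>k. rat_enum k \<le> r \<longleftrightarrow> (\<forall>i. x \<in> cylinders (U k i))"
  shows "limsup (\<lambda>t. ereal (claims U x t)) = ereal r"
proof (rule antisym; rule ccontr)
  let ?L = "limsup (\<lambda>t. ereal (claims U x t))"
  assume "\<not> ?L \<le> ereal r"
  then have "ereal r < ?L" by simp
  from ereal_dense2[OF this] obtain c where c: "ereal r < ereal c" "ereal c < ?L" by auto
  then have "r < c" by simp
  from Rats_dense_in_real[OF this] obtain q where q: "q \<in> \<rat>" "r < q" "q < c" by auto
  then obtain k where k: "rat_enum k = q" using rat_enum_surj by blast
  then obtain i where "x \<notin> cylinders (U k i)" using assms[of k] q(2) by auto
  then have "?L \<le> ereal q" unfolding k[symmetric] by (rule limsup_claims_le)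
  also have "\<dots> < ereal c" using q(3) by simp
  also have "\<dots> < ?L" by (fact c(2))
  finally have "?L < ?L" .
  then show False by simp
next
  let ?L = "limsup (\<lambda>t. ereal (claims U x t))"
  assume "\<not> ereal r \<le> ?L"
  then have "?L < ereal r" by simp
  from ereal_dense2[OF this] obtain c where c: "?L < ereal c" "ereal c < ereal r" by auto
  then have "c < r" by simp
  from Rats_dense_in_real[OF this] obtain q where q: "q \<in> \<rat>" "c < q" "q < r" by auto
  then obtain j where j: "rat_enum j = q" using rat_enum_surj by blast
  have "x \<in> cylinders (U k i)" if "rat_enum k \<le> rat_enum j" for k i
    using assms[of k] that j q(3) by simp
  then have "ereal q \<le> ?L" unfolding j[symmetric] by (rule limsup_claims_ge)
  also have "\<dots> < ereal c" by (fact c(1))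
  also have "\<dots> < ereal q" using q(2) by simp
  finally have "ereal q < ereal q" .
  then show False by simp
qed

lemma counting_strategy_winning:
  assumes "is_tree A T" "T \<noteq> {}"
    and superlevel: "\<And>k x. x \<in> branches T \<Longrightarrow> rat_enum k \<le> f x \<longleftrightarrow> (\<forall>i. x \<in> cylinders (U k i))"
  shows "winning_II T f (counting_strategy U)"
  unfolding winning_II_def
proof (intro allI impI)
  fix \<sigma> assume "legal_stratI T \<sigma>"
  let ?x = "play_x \<sigma> (counting_strategy U)"
  have "?x \<in> branches T" using legal_play_in_branches assms(1,2) \<open>legal_stratI T \<sigma>\<close> by blast
  have "play_v \<sigma> (counting_strategy U) t = claims U ?x t" for t
    by (simp add: play_v_eq counting_strategy_def claims_def map_fst_play_hist prefix_Suc)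
  moreover have "limsup (\<lambda>t. ereal (claims U ?x t)) = ereal (f ?x)"
    using superlevel[OF \<open>?x \<in> branches T\<close>] by (rule limsup_claims_eq)
  ultimately show "II_wins_run f \<sigma> (counting_strategy U)" by (simp add: II_wins_run_def)
qed

lemma Gdelta_separated_or_winning_I:
  assumes tree: "is_tree A T" "T \<noteq> {}" "pruned T" "countable T"
    and "semi_Borel T f" "p < q"
  shows "(\<exists>\<sigma>. winning_I T f \<sigma>) \<or>
    Gdelta_separated {x \<in> branches T. q \<le> f x} {x \<in> branches T. f x < p}"
proof -
  define B where "B = {x \<in> branches T. q \<le> f x}"
  define S where "S = {x \<in> branches T. f x < p}"
  have "S = branches T - {x \<in> branches T. p \<le> f x}" by (auto simp: S_def)
  then have analytic: "analytic_in T S"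
    using \<open>semi_Borel T f\<close> by (simp add: semi_Borel_def coanalytic_in_def)
  show ?thesis
  proof (cases "S = {}")
    case True
    then have "Gdelta_separated B S" using Gdelta_separated_empty by simp
    then show ?thesis unfolding B_def S_def by (rule disjI2)
  next
    case False
    then obtain g where cont: "continuous_map baire_topology (branch_topology T) g"
      and range: "range g = S"
      using analytic by (auto simp: analytic_in_def topspace_baire_topology)
    have S_branches: "range g \<inter> branches T = S" using range by (auto simp: S_def)
    show ?thesis
    proof (cases "Gdelta_separated B (range g \<inter> branches T)")
      case True
      then have "Gdelta_separated B S" by (simp only: S_branches)
      then show ?thesis unfolding B_def S_def by (rule disjI2)
    next
      case False
      interpret inseparable_analytic A T B g
        using tree cont range False by unfold_locales (auto simp: B_def S_def)
      have "winning_I T f (strategy ((p + q) / 2))"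
        using range \<open>p < q\<close> by (intro strategy_winning[of q f p]) (auto simp: B_def S_def)
      then show ?thesis by blast
    qed
  qed
qed

lemma strict_sublevel_set_eq_UN:
  fixes f :: "'b \<Rightarrow> real"
  shows "{x \<in> X. f x < r} = (\<Union>n. {x \<in> X. f x < r - 1 / Suc n})"
proof (intro set_eqI iffI)
  fix x assume x: "x \<in> {x \<in> X. f x < r}"
  then obtain n where "1 / Suc n < r - f x"
    using reals_Archimedean[of "r - f x"] by (auto simp: inverse_eq_divide)
  then have "x \<in> {x \<in> X. f x < r - 1 / Suc n}" using x by auto
  then show "x \<in> (\<Union>n. {x \<in> X. f x < r - 1 / Suc n})" by (rule UN_I[OF UNIV_I])
next
  fix x assume "x \<in> (\<Union>n. {x \<in> X. f x < r - 1 / Suc n})"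
  then obtain n where n: "x \<in> X" "f x < r - 1 / Suc n" by auto
  have "0 < 1 / real (Suc n)" by simp
  then have "f x < r" using n(2) by linarith
  then show "x \<in> {x \<in> X. f x < r}" using n(1) by simp
qed

lemma superlevel_set_Gdelta:
  fixes f :: "(nat \<Rightarrow> 'a) \<Rightarrow> real"
  assumes "\<And>p. p < r \<Longrightarrow>
    Gdelta_separated {x \<in> branches T. r \<le> f x} {x \<in> branches T. f x < p}"
  shows "\<exists>Z :: nat \<Rightarrow> 'a list set. \<forall>x\<in>branches T. r \<le> f x \<longleftrightarrow> (\<forall>i. x \<in> cylinders (Z i))"
proof -
  have "{x \<in> branches T. f x < r} = (\<Union>n. {x \<in> branches T. f x < r - 1 / Suc n})"
    by (rule strict_sublevel_set_eq_UN)
  moreover have "Gdelta_separated {x \<in> branches T. r \<le> f x} (\<Union>n. {x \<in> branches T. f x < r - 1 / Suc n})"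
    by (rule Gdelta_separated_UN) (simp_all add: assms)
  ultimately have "Gdelta_separated {x \<in> branches T. r \<le> f x} {x \<in> branches T. f x < r}"
    by simp
  then obtain Z :: "nat \<Rightarrow> 'a list set"
    where Z: "\<forall>i. {x \<in> branches T. r \<le> f x} \<subseteq> cylinders (Z i)"
      "\<forall>x\<in>{x \<in> branches T. f x < r}. \<exists>i. x \<notin> cylinders (Z i)"
    by (rule Gdelta_separated_sequence)
  have "r \<le> f x \<longleftrightarrow> (\<forall>i. x \<in> cylinders (Z i))" if x: "x \<in> branches T" for x
  proof
    show "\<forall>i. x \<in> cylinders (Z i)" if "r \<le> f x" using Z(1) x that by auto
  next
    assume all: "\<forall>i. x \<in> cylinders (Z i)"
    show "r \<le> f x"
    proof (rule ccontr)
      assume "\<not> r \<le> f x"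
      then obtain i where "x \<notin> cylinders (Z i)" using Z(2) x by auto
      then show False using all by simp
    qed
  qed
  then show ?thesis by (intro exI[of _ Z] ballI)
qed

theorem mainTheorem12:
  fixes A :: "'a set" and T :: "'a list set" and f :: "(nat \<Rightarrow> 'a) \<Rightarrow> real"
  assumes "countable A" and "A \<noteq> {}"
    and "is_tree A T" and "T \<noteq> {}" and "pruned T"
    and "semi_Borel T f"
  shows "game_determined T f"
proof (cases "\<exists>\<sigma>. winning_I T f \<sigma>")
  case False
  have "countable T" using assms(1,3) by (rule countable_tree[rotated])
  have sep: "Gdelta_separated {x \<in> branches T. q \<le> f x} {x \<in> branches T. f x < p}"
    if "p < q" for p q
    using Gdelta_separated_or_winning_I[OF assms(3-5) \<open>countable T\<close> assms(6) that] False by simp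
  have "\<forall>k. \<exists>Z. \<forall>x\<in>branches T. rat_enum k \<le> f x \<longleftrightarrow> (\<forall>i::nat. x \<in> cylinders (Z i))"
    by (intro allI superlevel_set_Gdelta sep)
  then obtain U where "\<forall>k. \<forall>x\<in>branches T. rat_enum k \<le> f x \<longleftrightarrow> (\<forall>i::nat. x \<in> cylinders (U k i))"
    by (rule choice[THEN exE])
  then have "winning_II T f (counting_strategy U)"
    using assms(3,4) by (intro counting_strategy_winning) auto
  then show ?thesis by (auto simp: game_determined_def)
qed (simp add: game_determined_def)

end
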